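(* Let $p$ be a prime and $n\ge 1$. Let $f_0,f_1,\ldots,f_{p-1}$ be near-bent functions from $\mathbb{F}_{p^n}$ to $\mathbb{F}_p$ such that $\mathrm{supp}(\widehat{f_i})\cap \mathrm{supp}(\widehat{f_j})=\emptyset$ for all $0\le i\ne j\le p-1$. Then the function $F:\mathbb{F}_{p^n}\times\mathbb{F}_p\to\mathbb{F}_p$ defined by \[ F(x,y)=(p-1)\sum_{k=0}^{p-1}\Big(\prod_{j\in\mathbb{F}_p,\, j\ne k}(y-j)\Big)f_k(x) \] is bent (as a function on the $(n+1)$-dimensional $\mathbb{F}_p$-space $\mathbb{F}_{p^n}\times\mathbb{F}_p$, with inner product $\langle (a,b),(x,y)\rangle=\mathrm{Tr}_n(ax)+by$).
   Context: $\epsilon_p=e^{2\pi i/p}$ and $\mathrm{Tr}_n$ is the absolute trace from $\mathbb{F}_{p^n}$ to $\mathbb{F}_p$. For $f:\mathbb{F}_{p^n}\to\mathbb{F}_p$ the Fourier transform is $\widehat{f}(b)=\sum_{x\in\mathbb{F}_{p^n}}\epsilon_p^{f(x)-\mathrm{Tr}_n(bx)}$; more generally for a function $g$ on an $m$-dimensional $\mathbb{F}_p$-space $V$ with inner product $\langle\cdot,\cdot\rangle$, $\widehat{g}(b)=\sum_{x\in V}\epsilon_p^{g(x)-\langle b,x\rangle}$. $g$ is bent if $|\widehat{g}(b)|^2=p^m$ for all $b$. A function $f:\mathbb{F}_{p^n}\to\mathbb{F}_p$ is near-bent if $|\widehat{f}(b)|^2\in\{0,p^{n+1}\}$ for all $b\in\mathbb{F}_{p^n}$.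 $\mathrm{supp}(\widehat f)=\{b\in\mathbb{F}_{p^n}:\widehat f(b)\neq 0\}$. *)

theory Defs
  imports "HOL-Analysis.Analysis"
begin

(* F_p is represented by the integers, read modulo p (all notions below only
   depend on residues mod p).  F_{p^n} is a finite field type 'a with
   CHAR('a) = p and CARD('a) = p^n. *)

definition eps :: "nat \<Rightarrow> int \<Rightarrow> complex" where
  "eps p k = cis (2 * pi * real_of_int k / real p)"

definition trace_field :: "nat \<Rightarrow> nat \<Rightarrow> 'a::field \<Rightarrow> 'a" where
  "trace_field p n x = (\<Sum>i<n. x ^ (p ^ i))"

(* the trace as a residue in {0..<p} (the trace lies in the prime field) *)
definition Tr :: "nat \<Rightarrow> nat \<Rightarrow> 'a::field \<Rightarrow> int" where
  "Tr p n x = (THE k. k \<in> {0..<int p} \<and> of_int k = trace_field p n x)"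

definition walsh :: "nat \<Rightarrow> nat \<Rightarrow> ('a::{field,finite} \<Rightarrow> int) \<Rightarrow> 'a \<Rightarrow> complex" where
  "walsh p n f b = (\<Sum>x\<in>UNIV. eps p (f x - Tr p n (b * x)))"

definition near_bent :: "nat \<Rightarrow> nat \<Rightarrow> ('a::{field,finite} \<Rightarrow> int) \<Rightarrow> bool" where
  "near_bent p n f \<longleftrightarrow> (\<forall>b. (cmod (walsh p n f b))^2 \<in> {0, real p ^ (n+1)})"

definition supp_walsh :: "nat \<Rightarrow> nat \<Rightarrow> ('a::{field,finite} \<Rightarrow> int) \<Rightarrow> 'a set" where
  "supp_walsh p n f = {b. walsh p n f b \<noteq> 0}"

definition walsh2 :: "nat \<Rightarrow> nat \<Rightarrow> ('a::{field,finite} \<Rightarrow> int \<Rightarrow> int) \<Rightarrow> 'a \<Rightarrow> int \<Rightarrow> complex" where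
  "walsh2 p n G a b = (\<Sum>x\<in>UNIV. \<Sum>y\<in>{0..<int p}. eps p (G x y - Tr p n (a * x) - b * y))"

definition bent2 :: "nat \<Rightarrow> nat \<Rightarrow> ('a::{field,finite} \<Rightarrow> int \<Rightarrow> int) \<Rightarrow> bool" where
  "bent2 p n G \<longleftrightarrow> (\<forall>a. \<forall>b\<in>{0..<int p}. (cmod (walsh2 p n G a b))^2 = real p ^ (n+1))"

end

theory Submission
  imports Defs "HOL-Number_Theory.Residues" "HOL-Computational_Algebra.Polynomial"
    "HOL-Library.Real_Mod"
begin

(* Let F(x,y) = (p-1) * sum_k L_k(y) f_k(x) with the Lagrange products
   L_k(y) = prod_{j <> k} (y - j).  Modulo p, Wilson's theorem gives
   (p-1) L_k(y) = [y = k], so F(x,y) = f_y(x) and the Fourier transform splits as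
     F^(a,b) = sum_y eps(-b y) f_y^(a).
   Parseval's identity for the trace character shows that a near-bent function has
   exactly p^(n-1) points in its spectral support; p pairwise disjoint supports of
   this size therefore partition F_{p^n}.  Hence for every a exactly one f_k^(a) is
   nonzero, F^(a,b) reduces to a single term of absolute value p^((n+1)/2), and F is
   bent. *)

section \<open>Additive characters of Z/pZ\<close>

lemma eps_add: "eps p (a + b) = eps p a * eps p b"
  unfolding eps_def by (simp add: cis_mult add_divide_distrib distrib_left)

lemma eps_multiple: assumes "p > 0" shows "eps p (int p * k) = 1"
proof -
  have "2 * pi * real_of_int (int p * k) / real p = 2 * pi * real_of_int k"
    using assms by simp
  thus ?thesis unfolding eps_def by (simp add: Ints_of_int)
qed

lemma eps_cong: assumes "p > 0" "[a = b] (mod int p)" shows "eps p a = eps p b"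
proof -
  obtain k where "b = a + int p * k" using assms(2) unfolding cong_iff_lin by blast
  thus ?thesis using eps_add eps_multiple[OF assms(1)] by simp
qed

lemma eps_eq_1_imp_dvd: assumes "p > 0" "eps p a = 1" shows "int p dvd a"
proof -
  from assms(2) obtain m where "2 * pi * real_of_int a / real p = of_int m * (2 * pi)"
    unfolding eps_def cis_eq_1_iff by blast
  hence "real_of_int a = of_int m * real p" using assms(1) by (simp add: field_simps)
  hence "a = m * int p" by (metis of_int_eq_iff of_int_mult of_int_of_nat_eq)
  thus ?thesis by simp
qed

lemma norm_eps [simp]: "norm (eps p a) = 1"
  by (simp add: eps_def)

lemma cnj_eps: "cnj (eps p a) = eps p (- a)"
  by (simp add: eps_def cis_cnj)

lemma mult_cnj_norm_1: "norm (z::complex) = 1 \<Longrightarrow> z * cnj z = 1"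
  using complex_norm_square[of z] by simp

section \<open>The Lagrange selector\<close>

text \<open>For y in F_p the product of all differences y - j, j <> y, is (p-1)! = -1 mod p.\<close>
lemma prod_differences_cong:
  assumes prime: "prime p" and y: "y \<in> {0..<int p}"
  shows "[(\<Prod>j\<in>{0..<int p} - {y}. y - j) = -1] (mod int p)"
proof -
  have p0: "p > 0" using prime prime_gt_0_nat by blast
  define S where "S = {0..<int p} - {y}"
  define h where "h j = nat ((y - j) mod int p)" for j
  have inj: "inj_on h S"
  proof (rule inj_onI)
    fix a b assume ab: "a \<in> S" "b \<in> S" "h a = h b"
    have "(y - a) mod int p = (y - b) mod int p"
      using ab(3) p0 unfolding h_def by (simp add: eq_nat_nat_iff)
    hence "[a = b] (mod int p)"
      by (simp add: cong_def [symmetric] cong_iff_dvd_diff dvd_diff_commute)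
    thus "a = b" using ab(1,2) by (simp add: S_def cong_def)
  qed
  have "h ` S \<subseteq> {1..p - 1}"
  proof
    fix m assume "m \<in> h ` S"
    then obtain j where j: "j \<in> S" "m = h j" by blast
    have "(y - j) mod int p \<noteq> 0"
    proof
      assume "(y - j) mod int p = 0"
      hence "[y = j] (mod int p)" by (simp add: cong_iff_dvd_diff dvd_eq_mod_eq_0)
      thus False using j(1) y by (simp add: S_def cong_def)
    qed
    moreover have "0 \<le> (y - j) mod int p" "(y - j) mod int p < int p" using p0 by simp_all
    ultimately have "0 < (y - j) mod int p" "(y - j) mod int p < int p" by simp_all
    thus "m \<in> {1..p - 1}" using j(2) unfolding h_def by auto
  qed
  moreover have "card (h ` S) = p - 1" using inj y by (simp add: card_image S_def)
  ultimately have "h ` S = {1..p - 1}" by (intro card_subset_eq) auto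
  hence bij: "bij_betw h S {1..p - 1}" using inj by (simp add: bij_betw_def)
  have "[(\<Prod>j\<in>S. y - j) = (\<Prod>j\<in>S. int (h j))] (mod int p)"
    by (rule cong_prod) (use p0 in \<open>simp add: h_def cong_def\<close>)
  also have "(\<Prod>j\<in>S. int (h j)) = (\<Prod>m\<in>{1..p - 1}. int m)"
    using prod.reindex_bij_betw[OF bij, of int] .
  also have "\<dots> = int (fact (p - 1))" by (simp add: fact_prod)
  also have "[\<dots> = -1] (mod int p)"
    using wilson_theorem[OF prime] by (simp add: of_nat_fact)
  finally show ?thesis unfolding S_def .
qed

definition lagrange_combination :: "nat \<Rightarrow> (nat \<Rightarrow> 'a \<Rightarrow> int) \<Rightarrow> 'a \<Rightarrow> int \<Rightarrow> int" where
  "lagrange_combination p f x y =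
     (int p - 1) * (\<Sum>k<p. (\<Prod>j\<in>{0..<int p} - {int k}. y - j) * f k x)"

lemma lagrange_combination_cong:
  assumes prime: "prime p" and y: "y \<in> {0..<int p}"
  shows "[lagrange_combination p f x y = f (nat y) x] (mod int p)"
proof -
  define L where "L k = (\<Prod>j\<in>{0..<int p} - {int k}. y - j)" for k
  have "L k = 0" if "k \<noteq> nat y" for k
    using that y unfolding L_def by (subst prod_zero_iff) auto
  hence "(\<Sum>k<p. L k * f k x) = (\<Sum>k<p. if k = nat y then L k * f k x else 0)"
    by (intro sum.cong) auto
  also have "\<dots> = L (nat y) * f (nat y) x" using y by (simp add: nat_less_iff)
  finally have "lagrange_combination p f x y = (int p - 1) * (L (nat y) * f (nat y) x)"
    by (simp add: lagrange_combination_def L_def)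
  also have "[(int p - 1) * (L (nat y) * f (nat y) x) = (int p - 1) * (-1 * f (nat y) x)] (mod int p)"
    using prod_differences_cong[OF prime y] y unfolding L_def
    by (intro cong_mult cong_refl) simp
  also have "[(int p - 1) * (-1 * f (nat y) x) = f (nat y) x] (mod int p)"
    unfolding cong_iff_lin by (intro exI[of _ "f (nat y) x"]) (simp add: algebra_simps)
  finally show ?thesis .
qed

lemma walsh2_lagrange_combination:
  fixes f :: "nat \<Rightarrow> 'a::{field,finite} \<Rightarrow> int"
  assumes prime: "prime p"
  shows "walsh2 p n (lagrange_combination p f) a b
       = (\<Sum>y\<in>{0..<int p}. eps p (- (b * y)) * walsh p n (f (nat y)) a)"
proof -
  have p0: "p > 0" using prime prime_gt_0_nat by blast
  have "walsh2 p n (lagrange_combination p f) a b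
      = (\<Sum>x\<in>UNIV. \<Sum>y\<in>{0..<int p}. eps p (- (b * y)) * eps p (f (nat y) x - Tr p n (a * x)))"
    unfolding walsh2_def
  proof (intro sum.cong refl)
    fix x y assume y: "y \<in> {0..<int p}"
    have "[lagrange_combination p f x y - Tr p n (a * x) - b * y
          = (f (nat y) x - Tr p n (a * x)) + - (b * y)] (mod int p)"
      using lagrange_combination_cong[OF prime y, of f x] by (simp add: cong_diff)
    hence "eps p (lagrange_combination p f x y - Tr p n (a * x) - b * y)
        = eps p ((f (nat y) x - Tr p n (a * x)) + - (b * y))"
      by (rule eps_cong[OF p0])
    thus "eps p (lagrange_combination p f x y - Tr p n (a * x) - b * y)
        = eps p (- (b * y)) * eps p (f (nat y) x - Tr p n (a * x))"
      by (simp only: eps_add mult.commute)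
  qed
  also have "\<dots> = (\<Sum>y\<in>{0..<int p}. \<Sum>x\<in>UNIV. eps p (- (b * y)) * eps p (f (nat y) x - Tr p n (a * x)))"
    by (rule sum.swap)
  also have "\<dots> = (\<Sum>y\<in>{0..<int p}. eps p (- (b * y)) * walsh p n (f (nat y)) a)"
    unfolding walsh_def by (simp only: sum_distrib_left)
  finally show ?thesis .
qed

lemma walsh2_single_support:
  fixes f :: "nat \<Rightarrow> 'a::{field,finite} \<Rightarrow> int"
  assumes "prime p" "k0 < p"
    and vanish: "\<And>k. k < p \<Longrightarrow> k \<noteq> k0 \<Longrightarrow> walsh p n (f k) a = 0"
  shows "cmod (walsh2 p n (lagrange_combination p f) a b) = cmod (walsh p n (f k0) a)"
proof -
  have "(\<Sum>y\<in>{0..<int p}. eps p (- (b * y)) * walsh p n (f (nat y)) a)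
      = (\<Sum>y\<in>{0..<int p}. if y = int k0 then eps p (- (b * y)) * walsh p n (f (nat y)) a else 0)"
    by (intro sum.cong refl) (auto simp: vanish)
  also have "\<dots> = eps p (- (b * int k0)) * walsh p n (f k0) a" using assms(2) by simp
  finally show ?thesis
    by (simp add: walsh2_lagrange_combination[OF assms(1)] norm_mult)
qed

section \<open>Finite fields and the trace\<close>

text \<open>Every element of a finite field satisfies x^q = x, q the field size: multiplication
  by a nonzero x permutes the nonzero elements.\<close>
lemma finite_field_pow_card: "(x::'a::{field,finite}) ^ CARD('a) = x"
proof (cases "x = 0")
  case False
  have "x * (\<Prod>y\<in>UNIV - {0}. x * y) = x * x ^ (CARD('a) - 1) * \<Prod>(UNIV - {0})"
    by (simp add: prod.distrib mult_ac)
  also have "x * x ^ (CARD('a) - 1) = x ^ CARD('a)"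
    using finite_UNIV_card_ge_0[where ?'a = 'a] by (simp flip: power_Suc)
  also have "(\<Prod>y\<in>UNIV - {0}. x * y) = (\<Prod>y\<in>UNIV - {0}. y)"
    by (rule prod.reindex_bij_witness[of _ "\<lambda>y. y / x" "\<lambda>y. x * y"]) (use False in auto)
  finally show ?thesis by simp
qed (use finite_UNIV_card_ge_0[where ?'a = 'a] in auto)

definition add_char :: "nat \<Rightarrow> nat \<Rightarrow> 'a::field \<Rightarrow> complex" where
  "add_char p n x = eps p (Tr p n x)"

context
  fixes p n :: nat
  assumes prime_p: "prime p"
    and char_p: "CHAR('a::{field,finite}) = p"
    and card_field: "CARD('a) = p ^ n"
begin

lemma p_gt_1: "p > 1"
  using prime_p prime_gt_1_nat by blast

lemma p_pos: "p > 0"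
  using p_gt_1 by simp

text \<open>A field has at least two elements, so the degree n is positive.\<close>
lemma degree_pos: "n \<ge> 1"
proof -
  have "card {0::'a, 1} \<le> CARD('a)" by (rule card_mono) auto
  hence "2 \<le> p ^ n" using card_field by simp
  thus ?thesis by (cases n) auto
qed

lemma frobenius_add: "(x + y :: 'a) ^ (p ^ i) = x ^ (p ^ i) + y ^ (p ^ i)"
  by (rule freshmans_dream') (use prime_p char_p in auto)

lemma trace_add: "trace_field p n (x + y) = trace_field p n x + trace_field p n (y::'a)"
  unfolding trace_field_def by (simp add: frobenius_add sum.distrib)

text \<open>The trace is fixed by the Frobenius map, because x^(p^n) = x.\<close>
lemma trace_pow_p: "trace_field p n (x::'a) ^ p = trace_field p n x"
proof -
  define g where "g i = x ^ (p ^ i)" for i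
  have "(\<Sum>i<n. g i) ^ p = (\<Sum>i<n. g i ^ p)"
    by (rule freshmans_dream_sum) (use prime_p char_p in auto)
  also have "\<dots> = (\<Sum>i<n. g (Suc i))"
    by (simp add: g_def power_mult[symmetric] mult.commute)
  also have "\<dots> = (\<Sum>i<n. g i)"
  proof -
    have "g n = g 0" using finite_field_pow_card[of x] card_field by (simp add: g_def)
    thus ?thesis using sum.lessThan_Suc_shift[of g n] sum.lessThan_Suc[of g n] by simp
  qed
  finally show ?thesis unfolding trace_field_def g_def .
qed

lemma of_int_eq_iff_cong: "(of_int a :: 'a) = of_int b \<longleftrightarrow> [a = b] (mod int p)"
proof -
  have "(of_int a :: 'a) = of_int b \<longleftrightarrow> (of_int (a - b) :: 'a) = 0" by simp
  also have "\<dots> \<longleftrightarrow> int CHAR('a) dvd (a - b)" by (rule of_int_eq_0_iff_char_dvd)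
  finally show ?thesis using char_p by (simp add: cong_iff_dvd_diff)
qed

text \<open>The fixed points of Frobenius are exactly the prime field: the p elements
  0, ..., p-1 are fixed, and t^p - t has at most p roots.\<close>
lemma frobenius_fixed_points: "{t::'a. t ^ p = t} = of_nat ` {0..<p}"
proof -
  have fixed: "(of_nat k :: 'a) ^ p = of_nat k" for k
  proof (induction k)
    case 0 thus ?case using p_pos by simp
  next
    case (Suc k)
    have "(of_nat k + 1 :: 'a) ^ p = of_nat k ^ p + 1 ^ p"
      by (rule freshmans_dream) (use prime_p char_p in auto)
    thus ?case using Suc by (simp add: add.commute)
  qed
  have "inj_on (of_nat :: nat \<Rightarrow> 'a) {0..<p}"
  proof (rule inj_onI)
    fix a b assume "a \<in> {0..<p}" "b \<in> {0..<p}" "(of_nat a :: 'a) = of_nat b"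
    thus "a = b" using of_int_eq_iff_cong[of "int a" "int b"] by (simp add: cong_def)
  qed
  hence card_prime_field: "card (of_nat ` {0..<p} :: 'a set) = p" by (simp add: card_image)
  define P where "P = Polynomial.monom (1::'a) p + [:0, -1:]"
  have "degree P = p" unfolding P_def using p_gt_1
    by (subst degree_add_eq_left) (auto simp: degree_monom_eq)
  hence "P \<noteq> 0" using p_gt_1 by auto
  have "{t::'a. t ^ p = t} = {t. poly P t = 0}" by (auto simp: P_def poly_monom)
  hence "card {t::'a. t ^ p = t} \<le> p"
    using card_poly_roots_bound[OF \<open>P \<noteq> 0\<close>] \<open>degree P = p\<close> by simp
  moreover have sub: "of_nat ` {0..<p} \<subseteq> {t::'a. t ^ p = t}" using fixed by auto
  ultimately have "card (of_nat ` {0..<p} :: 'a set) = card {t::'a. t ^ p = t}"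
    using card_mono[OF finite sub] card_prime_field by simp
  thus ?thesis using card_subset_eq[OF finite sub] by simp
qed

lemma Tr_spec: "Tr p n x \<in> {0..<int p} \<and> of_int (Tr p n x) = trace_field p n (x::'a)"
  unfolding Tr_def
proof (rule theI')
  have "trace_field p n x \<in> {t. t ^ p = t}" using trace_pow_p by simp
  then obtain k where k: "k < p" "of_nat k = trace_field p n x"
    unfolding frobenius_fixed_points by auto
  have "k' = int k" if "k' \<in> {0..<int p}" "of_int k' = trace_field p n x" for k'
    using that k of_int_eq_iff_cong[of k' "int k"] by (simp add: cong_def)
  thus "\<exists>!k. k \<in> {0..<int p} \<and> of_int k = trace_field p n x"
    using k by (intro ex1I[of _ "int k"]) auto
qed

lemma Tr_add: "[Tr p n (x + y) = Tr p n x + Tr p n (y::'a)] (mod int p)"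
proof -
  have "(of_int (Tr p n (x + y)) :: 'a) = of_int (Tr p n x + Tr p n y)"
    using Tr_spec trace_add by simp
  thus ?thesis using of_int_eq_iff_cong by blast
qed

text \<open>The trace map is not identically zero: a polynomial of degree p^(n-1) cannot
  vanish on all p^n elements.\<close>
lemma trace_nonzero: "\<exists>y::'a. trace_field p n y \<noteq> 0"
proof (rule ccontr)
  assume zero: "\<not> ?thesis"
  define Q where "Q = (\<Sum>i<n. Polynomial.monom (1::'a) (p ^ i))"
  have coeff_Q: "Polynomial.coeff Q m = (\<Sum>i<n. if p ^ i = m then 1 else 0)" for m
    unfolding Q_def by (simp add: coeff_sum coeff_monom)
  have "Polynomial.coeff Q (p ^ (n - 1)) = (\<Sum>i<n. if i = n - 1 then 1 else 0)"
    unfolding coeff_Q using p_gt_1 by (intro sum.cong) (auto simp: power_inject_exp)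
  also have "\<dots> = 1" using degree_pos by simp
  finally have "Q \<noteq> 0" by auto
  have "degree Q \<le> p ^ (n - 1)"
  proof (rule degree_le, intro allI impI)
    fix m assume m: "p ^ (n - 1) < m"
    have "p ^ i \<noteq> m" if "i < n" for i
    proof -
      have "p ^ i \<le> p ^ (n - 1)"
        using that p_gt_1 by (intro power_increasing) auto
      thus ?thesis using m by auto
    qed
    thus "Polynomial.coeff Q m = 0" unfolding coeff_Q by simp
  qed
  have "UNIV = {y::'a. poly Q y = 0}"
    using zero unfolding Q_def trace_field_def by (auto simp: poly_sum poly_monom)
  hence "CARD('a) \<le> p ^ (n - 1)"
    using card_poly_roots_bound[OF \<open>Q \<noteq> 0\<close>] \<open>degree Q \<le> _\<close> by simp
  moreover have "p ^ (n - 1) < p ^ n"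
    using p_gt_1 degree_pos by (intro power_strict_increasing) auto
  ultimately show False using card_field by simp
qed

section \<open>The canonical additive character\<close>

lemma add_char_add: "add_char p n (x + y) = add_char p n x * add_char p n (y::'a)"
  unfolding add_char_def using eps_cong[OF p_pos Tr_add] eps_add by simp

lemma norm_add_char [simp]: "norm (add_char p n (x::'a)) = 1"
  by (simp add: add_char_def)

lemma add_char_diff: "add_char p n (x - y) = add_char p n x * cnj (add_char p n (y::'a))"
proof -
  have "add_char p n x = add_char p n (x - y) * add_char p n y"
    using add_char_add[of "x - y" y] by simp
  moreover have "add_char p n y * cnj (add_char p n y) = 1"
    by (simp add: mult_cnj_norm_1)
  ultimately show ?thesis by (metis mult.assoc mult.right_neutral)
qed

lemma add_char_zero: "add_char p n (0::'a) = 1"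
  using add_char_diff[of 0 0] by (simp add: mult_cnj_norm_1)

text \<open>The character is nontrivial: the trace map is not identically zero, and eps p
  only takes the value 1 on multiples of p.\<close>
lemma add_char_nontrivial: "\<exists>y::'a. add_char p n y \<noteq> 1"
proof -
  obtain y :: 'a where y: "trace_field p n y \<noteq> 0" using trace_nonzero by blast
  have "add_char p n y \<noteq> 1"
  proof
    assume "add_char p n y = 1"
    hence "int p dvd Tr p n y" using eps_eq_1_imp_dvd p_pos by (simp add: add_char_def)
    hence "(of_int (Tr p n y) :: 'a) = 0" using of_int_eq_0_iff_char_dvd[where 'a='a] char_p by simp
    thus False using y Tr_spec[of y] by simp
  qed
  thus ?thesis by blast
qed

lemma add_char_orthogonality:
  "(\<Sum>b\<in>UNIV. add_char p n (b * x)) = (if x = 0 then of_nat (p ^ n) else (0::complex))"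
  for x :: 'a
proof (cases "x = 0")
  case True
  thus ?thesis using card_field by (simp add: add_char_zero)
next
  case False
  obtain y :: 'a where y: "add_char p n y \<noteq> 1" using add_char_nontrivial by blast
  define S where "S = (\<Sum>b\<in>UNIV. add_char p n (b::'a))"
  have line: "(\<Sum>b\<in>UNIV. add_char p n (b * x)) = S"
    unfolding S_def
    by (rule sum.reindex_bij_witness[of _ "\<lambda>b. b / x" "\<lambda>b. b * x"]) (use False in auto)
  have "S = (\<Sum>b\<in>UNIV. add_char p n (b + y))"
    unfolding S_def by (rule sum.reindex_bij_witness[of _ "\<lambda>b. b + y" "\<lambda>b. b - y"]) auto
  also have "\<dots> = S * add_char p n y"
    unfolding S_def by (simp add: add_char_add sum_distrib_right)
  finally have "S * (1 - add_char p n y) = 0" by (simp add: algebra_simps)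
  thus ?thesis using y False line by simp
qed

lemma walsh_add_char:
  "walsh p n g b = (\<Sum>x\<in>UNIV. eps p (g x) * cnj (add_char p n (b * x)))"
  for g :: "'a \<Rightarrow> int"
  unfolding walsh_def add_char_def by (simp add: cnj_eps eps_add[symmetric])

section \<open>Parseval's identity and near-bent functions\<close>

text \<open>Parseval's identity: expanding |W(b)|^2 as a double sum over x, z and summing over b,
  orthogonality leaves only the diagonal x = z.\<close>
lemma parseval: "(\<Sum>b\<in>UNIV. (cmod (walsh p n g b))^2) = real p ^ (2 * n)"
  for g :: "'a \<Rightarrow> int"
proof -
  define A where "A x = eps p (g x)" for x
  define F where "F b x z = A x * cnj (A z) * add_char p n (b * (z - x))" for b x z
  have A_unit: "A x * cnj (A x) = 1" for x
    by (simp add: A_def mult_cnj_norm_1)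
  have square: "complex_of_real ((cmod (walsh p n g b))^2) = (\<Sum>x\<in>UNIV. \<Sum>z\<in>UNIV. F b x z)" for b
  proof -
    have "complex_of_real ((cmod (walsh p n g b))^2) = walsh p n g b * cnj (walsh p n g b)"
      by (rule complex_norm_square)
    also have "\<dots> = (\<Sum>x\<in>UNIV. A x * cnj (add_char p n (b * x))) *
                    (\<Sum>z\<in>UNIV. cnj (A z) * add_char p n (b * z))"
      unfolding walsh_add_char A_def by simp
    also have "\<dots> = (\<Sum>x\<in>UNIV. \<Sum>z\<in>UNIV. F b x z)"
      unfolding F_def right_diff_distrib add_char_diff
      by (simp add: sum_product mult_ac)
    finally show ?thesis .
  qed
  have "complex_of_real (\<Sum>b\<in>UNIV. (cmod (walsh p n g b))^2) = (\<Sum>b\<in>UNIV. \<Sum>x\<in>UNIV. \<Sum>z\<in>UNIV. F b x z)"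
    by (simp only: of_real_sum square)
  also have "\<dots> = (\<Sum>x\<in>UNIV. \<Sum>b\<in>UNIV. \<Sum>z\<in>UNIV. F b x z)"
    by (rule sum.swap)
  also have "\<dots> = (\<Sum>x\<in>UNIV. \<Sum>z\<in>UNIV. \<Sum>b\<in>UNIV. F b x z)"
    by (intro sum.cong refl sum.swap)
  also have "\<dots> = (\<Sum>x\<in>UNIV. \<Sum>z\<in>UNIV. A x * cnj (A z) * (\<Sum>b\<in>UNIV. add_char p n (b * (z - x))))"
    unfolding F_def by (simp only: sum_distrib_left)
  also have "\<dots> = (\<Sum>x\<in>(UNIV::'a set). \<Sum>z\<in>(UNIV::'a set). if z = x then of_nat (p ^ n) else 0)"
  proof (intro sum.cong refl)
    fix x z :: 'a
    show "A x * cnj (A z) * (\<Sum>b\<in>UNIV. add_char p n (b * (z - x)))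
        = (if z = x then of_nat (p ^ n) else 0)"
      by (cases "z = x") (simp_all add: add_char_orthogonality add_char_zero card_field A_unit)
  qed
  also have "\<dots> = of_nat (p ^ n) * of_nat (p ^ n)"
    using card_field by simp
  also have "\<dots> = complex_of_real (real p ^ (2 * n))"
    by (simp add: mult_2 power_add)
  finally show ?thesis using of_real_eq_iff by blast
qed

text \<open>A near-bent function has exactly p^(n-1) points in its spectral support:
  by Parseval, p^(2n) is the number of such points times p^(n+1).\<close>
lemma near_bent_support_card:
  fixes g :: "'a \<Rightarrow> int"
  assumes "near_bent p n g"
  shows "card (supp_walsh p n g) = p ^ (n - 1)"
proof -
  define S where "S = supp_walsh p n g"
  have spectrum: "(cmod (walsh p n g b))^2 = (if b \<in> S then real p ^ (n + 1) else 0)" for b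
    using assms unfolding near_bent_def S_def supp_walsh_def by auto
  have "real p ^ (2 * n) = (\<Sum>b\<in>UNIV. (cmod (walsh p n g b))^2)"
    by (rule parseval[symmetric])
  also have "\<dots> = (\<Sum>b\<in>UNIV. if b \<in> S then real p ^ (n + 1) else 0)"
    by (simp only: spectrum)
  also have "\<dots> = real (card S) * real p ^ (n + 1)"
    by (simp add: sum.If_cases Int_def)
  finally have "real p ^ (2 * n) = real (card S) * real p ^ (n + 1)" .
  moreover have "2 * n = (n - 1) + (n + 1)" using degree_pos by simp
  ultimately have "real p ^ (n - 1) * real p ^ (n + 1) = real (card S) * real p ^ (n + 1)"
    by (simp only: power_add)
  hence "real (card S) = real p ^ (n - 1)" using p_pos by simp
  thus ?thesis unfolding S_def by (metis of_nat_eq_iff of_nat_power)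
qed

lemma near_bent_supports_cover:
  fixes f :: "nat \<Rightarrow> 'a \<Rightarrow> int"
  assumes near_bent: "\<And>k. k < p \<Longrightarrow> near_bent p n (f k)"
    and disjoint: "\<And>i j. i < p \<Longrightarrow> j < p \<Longrightarrow> i \<noteq> j \<Longrightarrow>
           supp_walsh p n (f i) \<inter> supp_walsh p n (f j) = {}"
  shows "(\<Union>k<p. supp_walsh p n (f k)) = UNIV"
proof -
  have "card (\<Union>k<p. supp_walsh p n (f k)) = (\<Sum>k<p. card (supp_walsh p n (f k)))"
    by (intro card_UN_disjoint) (use disjoint in auto)
  also have "\<dots> = p * p ^ (n - 1)" using near_bent near_bent_support_card by simp
  also have "\<dots> = CARD('a)" using degree_pos card_field by (cases n) auto
  finally show ?thesis by (intro card_subset_eq) auto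
qed

end

text \<open>For every a some f_k0 has a at its spectral support (supports cover), all other
  transforms vanish there (disjointness), so the transform of F at (a,b) has the modulus
  of the nonzero value of the near-bent transform of f_k0.\<close>

theorem theorem1:
  fixes f :: "nat \<Rightarrow> 'a::{field,finite} \<Rightarrow> int" and p n :: nat
  assumes "prime p" and "n \<ge> 1"
    and "CHAR('a) = p" and "CARD('a) = p ^ n"
    and "\<And>k. k < p \<Longrightarrow> near_bent p n (f k)"
    and "\<And>i j. i < p \<Longrightarrow> j < p \<Longrightarrow> i \<noteq> j \<Longrightarrow>
           supp_walsh p n (f i) \<inter> supp_walsh p n (f j) = {}"
  shows "bent2 p n (\<lambda>x y. (int p - 1) *
           (\<Sum>k<p. (\<Prod>j\<in>{0..<int p} - {int k}. (y - j)) * f k x))"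
proof -
  have F: "(\<lambda>x y. (int p - 1) * (\<Sum>k<p. (\<Prod>j\<in>{0..<int p} - {int k}. (y - j)) * f k x))
      = lagrange_combination p f"
    by (intro ext) (simp only: lagrange_combination_def)
  have bent: "(cmod (walsh2 p n (lagrange_combination p f) a b))^2 = real p ^ (n + 1)" for a b
  proof -
    have "a \<in> (\<Union>k<p. supp_walsh p n (f k))"
      using near_bent_supports_cover[OF assms(1,3,4) assms(5,6)] by simp
    then obtain k0 where k0: "k0 < p" "a \<in> supp_walsh p n (f k0)" by blast
    have "walsh p n (f k) a = 0" if "k < p" "k \<noteq> k0" for k
      using assms(6)[OF that(1) k0(1) that(2)] k0(2) unfolding supp_walsh_def by blast
    hence "cmod (walsh2 p n (lagrange_combination p f) a b) = cmod (walsh p n (f k0) a)"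
      by (rule walsh2_single_support[OF assms(1) k0(1)])
    moreover have "(cmod (walsh p n (f k0) a))^2 \<in> {0, real p ^ (n + 1)}"
      using assms(5)[OF k0(1)] unfolding near_bent_def by blast
    moreover have "(cmod (walsh p n (f k0) a))^2 \<noteq> 0"
      using k0(2) unfolding supp_walsh_def by simp
    ultimately show ?thesis by simp
  qed
  show ?thesis unfolding F bent2_def by (intro allI ballI bent)
qed

end
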